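(* Let $p\ge1$, $n\ge1$, and $u\in X^n\setminus\{0^n\}$ with decomposition $u=0^ka_1u_1a_2u_2\cdots a_tu_t$. Let $\mathcal P^u_n=(P^n_1(u),\dots,P^n_{m_u}(u))$ be the path of cycles of $u$ in $\Gamma^p_n$. Then: (1) $m_u=t$; (2) for each $j=1,\dots,t$, writing $N_j=k+j+\sum_{\ell=1}^j|u_\ell|$, the cycle $P^n_j(u)$ is the $e_{a_j}$-cycle with vertex set $\{0,a_j\}^{N_j}a_{j+1}u_{j+1}\cdots a_tu_t$ (so in particular $P^n_t(u)=C_n^{a_t}$); (3) the sequence of lengths is $\mathcal L^u_n=(2^{N_1},2^{N_2},\dots,2^{N_t})$, with $2^{N_t}=2^n$.
   Context: $X=\{0,1,\dots,p\}$; $\mathcal G_{S_p}$ is generated by $e_1,\dots,e_p$ acting on $X^\ast$ by $e_i(0w)=i\,e_i(w)$, $e_i(iw)=0w$, $e_i(jw)=jw$ for $j\notin\{0,i\}$. $\Gamma^p_n$ is the Schreier graph on $X^n$ with an edge labelled $e_j$ joining $v$ and $e_j(v)$ for all $v,j$. An $e_j$-cycle is the $\langle e_j\rangle$-orbit of a vertex together with its $e_j$-labelled edges; $C_n^i$ is the $e_i$-cycle with vertex set $\{0,i\}^n$. Decomposition: every $u\in X^n\setminus\{0^n\}$ is uniquely written $u=0^ka_1u_1\cdots a_tu_t$ with $k\ge0$, $a_j\in\{1,\dots,p\}$, $a_{j+1}\ne a_j$, $u_j\in\{0,a_j\}^\ast$. Path of cycles: consider the bipartite graph $B_n$ whose vertices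 are the vertices of $\Gamma^p_n$ and the $e$-cycles of length $\ge2$, a vertex being joined to each such cycle containing it; $B_n$ is a tree. Removing $0^n$ from $\Gamma^p_n$ leaves $p$ components; the $i$-th petal is the one containing $C_n^i\setminus\{0^n\}$. For $u\ne0^n$ in the $i$-th petal, the path of cycles $\mathcal P^u_n=(P^n_1(u),\dots,P^n_{m_u}(u))$ is the sequence of cycles met, in order, along the unique path in $B_n$ from $u$ to $C_n^i$ (so $u\in P^n_1(u)$ and $P^n_{m_u}(u)=C_n^i$), and $\mathcal L^u_n$ is the sequence of their lengths. *)

theory Defs
  imports Main
begin

text \<open>Words over X = {0,...,p} are lists of naturals with entries at most p.
  The generator e_i acts on words as follows.\<close>

fun act :: "nat \<Rightarrow> nat list \<Rightarrow> nat list" where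
  "act i [] = []"
| "act i (x # w) = (if x = 0 then i # act i w else if x = i then 0 # w else x # w)"

definition verts :: "nat \<Rightarrow> nat \<Rightarrow> nat list set" where
  "verts p n = {w. length w = n \<and> set w \<subseteq> {0..p}}"

definition gedges :: "nat \<Rightarrow> nat \<Rightarrow> (nat list \<times> nat list) set" where
  "gedges p n = {(v, act j v) | v j. v \<in> verts p n \<and> j \<in> {1..p}}"

text \<open>The orbit of v under the cyclic group generated by e_j (e_j permutes the
  finite set X^n, so the group orbit equals the forward orbit).\<close>
definition orbit :: "nat \<Rightarrow> nat list \<Rightarrow> nat list set" where
  "orbit j v = {(act j ^^ m) v | m. True}"

text \<open>An e_j-cycle is represented by its label j together with its vertex set;
  its length is the cardinality of its vertex set. These are the e-cycles of
  length at least 2, i.e. the cycle-nodes of the bipartite graph B_n.\<close>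
definition cycles :: "nat \<Rightarrow> nat \<Rightarrow> (nat \<times> nat list set) set" where
  "cycles p n = {(j, orbit j v) | j v. j \<in> {1..p} \<and> v \<in> verts p n \<and> card (orbit j v) \<ge> 2}"

definition cyc_len :: "nat \<times> nat list set \<Rightarrow> nat" where
  "cyc_len c = card (snd c)"

definition Ccyc :: "nat \<Rightarrow> nat \<Rightarrow> nat \<times> nat list set" where
  "Ccyc n i = (i, {w. length w = n \<and> set w \<subseteq> {0, i}})"

definition petal :: "nat \<Rightarrow> nat \<Rightarrow> nat \<Rightarrow> nat list set" where
  "petal p n i =
    (let Z = replicate n 0;
         E = {(v, w). ((v, w) \<in> gedges p n \<or> (w, v) \<in> gedges p n) \<and> v \<noteq> Z \<and> w \<noteq> Z}
     in {v \<in> verts p n - {Z}. \<exists>w \<in> snd (Ccyc n i) - {Z}. (v, w) \<in> E\<^sup>*})"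

text \<open>cs is the sequence of cycles of a simple path in B_n
  u - c_1 - v_1 - c_2 - ... - v_{m-1} - c_m with c_m = D.\<close>
definition is_cycle_path ::
  "nat \<Rightarrow> nat \<Rightarrow> nat list \<Rightarrow> (nat \<times> nat list set) list \<Rightarrow> nat \<times> nat list set \<Rightarrow> bool" where
  "is_cycle_path p n u cs D \<longleftrightarrow>
     cs \<noteq> [] \<and> last cs = D \<and> distinct cs \<and> set cs \<subseteq> cycles p n \<and>
     (\<exists>vs. length vs = length cs \<and> distinct vs \<and> vs ! 0 = u \<and>
        (\<forall>l < length cs. vs ! l \<in> snd (cs ! l)) \<and>
        (\<forall>l. 0 < l \<and> l < length cs \<longrightarrow> vs ! l \<in> snd (cs ! (l - 1))))"

definition path_of_cycles :: "nat \<Rightarrow> nat \<Rightarrow> nat list \<Rightarrow> (nat \<times> nat list set) list" where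
  "path_of_cycles p n u =
     (THE cs. \<exists>i \<in> {1..p}. u \<in> petal p n i \<and> is_cycle_path p n u cs (Ccyc n i))"

end

theory Submission
  imports Defs
begin

text \<open>On a word, e_j only moves the longest prefix over {0, j}, on which it acts as a binary
  odometer; so the e_j-cycle of w s (w that prefix) is {0, j}^|w| s, of length 2^|w|. Its root
  0^|w| s is its only vertex whose prefix over {0, j} is all zeros, and every other vertex of it
  has j as first nonzero letter. Hence each vertex lies in exactly one cycle of which it is not
  the root: the cycle of its first nonzero letter. A path of cycles must therefore go from each
  vertex to that cycle and from each cycle to its root, which makes it unique; the last nonzero
  letter, constant on a petal, keeps the path from passing through 0^n. For
  u = 0^k a_1 u_1 ... a_t u_t the root of the j-th cycle is 0^(N_j) a_(j+1) u_(j+1) ... a_t u_t,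
  whose first nonzero letter is a_(j+1).\<close>

section \<open>The generators as odometers\<close>

definition active_prefix :: "nat \<Rightarrow> nat list \<Rightarrow> nat list" where
  "active_prefix j v = takeWhile (\<lambda>x. x = 0 \<or> x = j) v"

definition passive_suffix :: "nat \<Rightarrow> nat list \<Rightarrow> nat list" where
  "passive_suffix j v = dropWhile (\<lambda>x. x = 0 \<or> x = j) v"

lemma active_prefix_append_passive_suffix [simp]: "active_prefix j v @ passive_suffix j v = v"
  unfolding active_prefix_def passive_suffix_def by simp

lemma set_active_prefix: "set (active_prefix j v) \<subseteq> {0, j}"
  unfolding active_prefix_def by (auto dest: set_takeWhileD)

lemma active_prefix_passive_suffix [simp]: "active_prefix j (passive_suffix j v) = []"
  unfolding active_prefix_def passive_suffix_def by (induction v) auto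

lemma active_prefix_append:
  assumes "set w \<subseteq> {0, j}" and "active_prefix j s = []"
  shows "active_prefix j (w @ s) = w" and "passive_suffix j (w @ s) = s"
  using assms unfolding active_prefix_def passive_suffix_def
  by (induction w) (simp_all add: takeWhile_eq_Nil_iff dropWhile_eq_self_iff)

lemma act_eq_self_if_active_prefix_Nil: "active_prefix j s = [] \<Longrightarrow> act j s = s"
  unfolding active_prefix_def by (cases s) (auto split: if_splits)

lemma length_act [simp]: "length (act j w) = length w"
  by (induction w) auto

lemma length_funpow_act [simp]: "length ((act j ^^ m) w) = length w"
  by (induction m) auto

lemma set_act: "set (act j w) \<subseteq> set w \<union> {0, j}"
  by (induction w) auto

lemma set_funpow_act: "set ((act j ^^ m) w) \<subseteq> set w \<union> {0, j}"
  by (induction m) (use set_act in fastforce)+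

lemma set_funpow_act_subset: "set w \<subseteq> {0, j} \<Longrightarrow> set ((act j ^^ m) w) \<subseteq> {0, j}"
  using set_funpow_act[where j = j and m = m and w = w] by blast

lemma act_append: "set w \<subseteq> {0, j} \<Longrightarrow> act j s = s \<Longrightarrow> act j (w @ s) = act j w @ s"
  by (induction w) auto

lemma funpow_act_append:
  "set w \<subseteq> {0, j} \<Longrightarrow> act j s = s \<Longrightarrow> (act j ^^ m) (w @ s) = (act j ^^ m) w @ s"
  by (induction m) (simp_all add: act_append set_funpow_act_subset)

text \<open>Reading \<open>0\<close> as the digit 1 and \<open>j\<close> as the digit 0, least significant digit first,
  \<open>e\<^sub>j\<close> adds 1 modulo \<open>2 ^ length w\<close> to a word \<open>w\<close> over \<open>{0, j}\<close>.\<close>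

fun odometer_value :: "nat list \<Rightarrow> nat" where
  "odometer_value [] = 0"
| "odometer_value (x # w) = (if x = 0 then 1 else 0) + 2 * odometer_value w"

lemma odometer_value_less: "odometer_value w < 2 ^ length w"
  by (induction w) auto

lemma odometer_value_act:
  assumes "set w \<subseteq> {0, j}" and "j \<noteq> 0"
  shows "odometer_value (act j w) = (odometer_value w + 1) mod 2 ^ length w"
  using assms
proof (induction w)
  case (Cons x w)
  show ?case
  proof (cases "x = 0")
    case True
    then have "odometer_value (act j (x # w)) = 2 * ((odometer_value w + 1) mod 2 ^ length w)"
      using Cons by simp
    also have "\<dots> = (2 * (odometer_value w + 1)) mod (2 * 2 ^ length w)"
      by (simp add: mult_mod_right)
    finally show ?thesis using True by simp
  next
    case False
    then show ?thesis using Cons.prems odometer_value_less[of w] by auto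
  qed
qed simp

lemma odometer_value_funpow_act:
  assumes "set w \<subseteq> {0, j}" and "j \<noteq> 0"
  shows "odometer_value ((act j ^^ m) w) = (odometer_value w + m) mod 2 ^ length w"
proof (induction m)
  case 0
  then show ?case using odometer_value_less[of w] by simp
next
  case (Suc m)
  then show ?case
    using odometer_value_act[OF set_funpow_act_subset[OF assms(1)] assms(2)] by (simp add: mod_simps)
qed

lemma odometer_value_inject:
  assumes "length w = length w'" "set w \<subseteq> {0, j}" "set w' \<subseteq> {0, j}"
    and "odometer_value w = odometer_value w'"
  shows "w = w'"
  using assms
proof (induction w arbitrary: w')
  case (Cons x w)
  then obtain y w'' where w': "w' = y # w''" by (cases w') auto
  have "odometer_value (x # w) mod 2 = odometer_value (y # w'') mod 2" using Cons.prems w' by simp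
  then have "x = y" using Cons.prems(2,3) w' by (auto split: if_splits)
  moreover have "w = w''"
    using Cons.IH[of w''] Cons.prems w' \<open>x = y\<close> by simp
  ultimately show ?case using w' by simp
qed simp

lemma funpow_act_surj:
  assumes "length w = length w'" "set w \<subseteq> {0, j}" "set w' \<subseteq> {0, j}" and "j \<noteq> 0"
  shows "\<exists>m. (act j ^^ m) w = w'"
proof
  define m where "m = odometer_value w' + 2 ^ length w - odometer_value w"
  have "odometer_value w + m = odometer_value w' + 2 ^ length w"
    using odometer_value_less[of w] unfolding m_def by simp
  then have "odometer_value ((act j ^^ m) w) = odometer_value w'"
    using odometer_value_funpow_act[OF assms(2,4)] odometer_value_less[of w'] assms(1) by simp
  moreover have "set ((act j ^^ m) w) \<subseteq> {0, j}" using set_funpow_act_subset[OF assms(2)] .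
  ultimately show "(act j ^^ m) w = w'"
    using odometer_value_inject assms(1,3) by simp
qed

lemma orbit_eq:
  assumes "j \<noteq> 0"
  shows "orbit j v = {w @ passive_suffix j v | w. length w = length (active_prefix j v) \<and> set w \<subseteq> {0, j}}"
proof -
  have "act j (passive_suffix j v) = passive_suffix j v"
    by (simp add: act_eq_self_if_active_prefix_Nil)
  then have split: "(act j ^^ m) v = (act j ^^ m) (active_prefix j v) @ passive_suffix j v" for m
    using funpow_act_append[OF set_active_prefix] active_prefix_append_passive_suffix by metis
  have "{(act j ^^ m) (active_prefix j v) | m. True} =
      {w. length w = length (active_prefix j v) \<and> set w \<subseteq> {0, j}}"
  proof (intro set_eqI iffI)
    fix w assume "w \<in> {(act j ^^ m) (active_prefix j v) | m. True}"
    then obtain m where "w = (act j ^^ m) (active_prefix j v)" by blast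
    then show "w \<in> {w. length w = length (active_prefix j v) \<and> set w \<subseteq> {0, j}}"
      using set_funpow_act_subset[OF set_active_prefix] by auto
  next
    fix w assume "w \<in> {w. length w = length (active_prefix j v) \<and> set w \<subseteq> {0, j}}"
    then show "w \<in> {(act j ^^ m) (active_prefix j v) | m. True}"
      using funpow_act_surj[OF _ set_active_prefix _ assms] by (metis (mono_tags) mem_Collect_eq)
  qed
  then show ?thesis unfolding orbit_def split by blast
qed

lemma card_orbit:
  assumes "j \<noteq> 0"
  shows "card (orbit j v) = 2 ^ length (active_prefix j v)"
proof -
  have "orbit j v = (\<lambda>w. w @ passive_suffix j v) ` {w. set w \<subseteq> {0, j} \<and> length w = length (active_prefix j v)}"
    using orbit_eq[OF assms] by auto
  then have "card (orbit j v) = card {w. set w \<subseteq> {0, j} \<and> length w = length (active_prefix j v)}"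
    by (simp add: card_image inj_on_def)
  then show ?thesis using card_lists_length_eq[of "{0, j}"] assms by (simp add: numeral_2_eq_2)
qed

lemma orbit_eq_if_mem:
  assumes "j \<noteq> 0" and "v' \<in> orbit j v"
  shows "orbit j v' = orbit j v"
proof -
  obtain w where w: "v' = w @ passive_suffix j v" "length w = length (active_prefix j v)" "set w \<subseteq> {0, j}"
    using assms orbit_eq by auto
  then show ?thesis
    using active_prefix_append[OF w(3) active_prefix_passive_suffix] orbit_eq[OF assms(1)] by simp
qed

lemma self_in_orbit: "v \<in> orbit j v"
  unfolding orbit_def by (auto intro: exI[of _ 0])

lemma act_in_orbit: "act j v \<in> orbit j v"
  unfolding orbit_def by (auto intro: exI[of _ 1])

lemma length_orbit: "v' \<in> orbit j v \<Longrightarrow> length v' = length v"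
  unfolding orbit_def by auto

lemma orbit_subset_verts: "v \<in> verts p n \<Longrightarrow> j \<le> p \<Longrightarrow> orbit j v \<subseteq> verts p n"
  unfolding orbit_def verts_def using set_funpow_act by fastforce

section \<open>Cycles and their roots\<close>

definition first_nonzero :: "nat list \<Rightarrow> nat" where
  "first_nonzero v = hd (dropWhile (\<lambda>x. x = 0) v)"

definition last_nonzero :: "nat list \<Rightarrow> nat" where
  "last_nonzero v = last (filter (\<lambda>x. x \<noteq> 0) v)"

definition first_cycle :: "nat list \<Rightarrow> nat \<times> nat list set" where
  "first_cycle v = (first_nonzero v, orbit (first_nonzero v) v)"

definition is_root :: "nat \<times> nat list set \<Rightarrow> nat list \<Rightarrow> bool" where
  "is_root c v \<longleftrightarrow> v \<in> snd c \<and> set (active_prefix (fst c) v) \<subseteq> {0}"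

lemma eq_replicate_zero_iff: "v = replicate n 0 \<longleftrightarrow> length v = n \<and> set v \<subseteq> {0}"
  by (auto intro: replicate_eqI)

lemma last_nonzero_append:
  "last_nonzero (w @ s) = (if set s \<subseteq> {0} then last_nonzero w else last_nonzero s)"
proof -
  have "filter (\<lambda>x. x \<noteq> 0) s = [] \<longleftrightarrow> set s \<subseteq> {0}" by (auto simp: filter_empty_conv)
  then show ?thesis unfolding last_nonzero_def by (simp add: last_append)
qed

lemma last_nonzero_eq: "set w \<subseteq> {0, j} \<Longrightarrow> \<not> set w \<subseteq> {0} \<Longrightarrow> last_nonzero w = j"
  unfolding last_nonzero_def by (induction w) (auto simp: last_nonzero_def filter_empty_conv)

lemma last_nonzero_orbit:
  assumes "j \<noteq> 0" "v \<in> orbit j x" "\<not> set v \<subseteq> {0}"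
  shows "last_nonzero v = (if set (passive_suffix j x) \<subseteq> {0} then j else last_nonzero (passive_suffix j x))"
proof -
  obtain w where w: "v = w @ passive_suffix j x" "set w \<subseteq> {0, j}"
    using assms(2) unfolding orbit_eq[OF assms(1)] by blast
  show ?thesis
  proof (cases "set (passive_suffix j x) \<subseteq> {0}")
    case True
    then have "\<not> set w \<subseteq> {0}" using assms(3) w(1) by auto
    then show ?thesis using True w last_nonzero_eq by (simp add: last_nonzero_append)
  qed (simp add: w(1) last_nonzero_append)
qed

lemma orbit_eq_Ccyc_if_zero_mem:
  assumes "j \<noteq> 0" and "replicate n 0 \<in> orbit j x"
  shows "orbit j x = snd (Ccyc n j)"
proof -
  obtain w where w: "replicate n 0 = w @ passive_suffix j x"
    using assms(2) unfolding orbit_eq[OF assms(1)] by blast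
  have "set (passive_suffix j x) \<subseteq> set (replicate n 0)" unfolding w by simp
  then have "set (passive_suffix j x) \<subseteq> {0}" by (auto simp: set_replicate_conv_if split: if_splits)
  then have "passive_suffix j x = []"
    using active_prefix_passive_suffix[of j x] hd_in_set
    unfolding active_prefix_def takeWhile_eq_Nil_iff by blast
  moreover have "length x = n" using length_orbit[OF assms(2)] by simp
  ultimately show ?thesis
    using orbit_eq[OF assms(1), of x] active_prefix_append_passive_suffix[of j x]
    unfolding Ccyc_def by auto
qed

lemma cycles_elim:
  assumes "c \<in> cycles p n"
  obtains j x where "c = (j, orbit j x)" "j \<in> {1..p}" "x \<in> verts p n"
  using assms unfolding cycles_def by auto

lemma root_unique:
  assumes "c \<in> cycles p n" "is_root c v" "is_root c v'"
  shows "v = v'"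
proof -
  obtain j x where c: "c = (j, orbit j x)" "j \<noteq> 0" using assms(1) by (auto elim: cycles_elim)
  have "r = replicate (length (active_prefix j x)) 0 @ passive_suffix j x" if "is_root c r" for r
  proof -
    have "r \<in> orbit j x" using that c unfolding is_root_def by simp
    then obtain w where w: "r = w @ passive_suffix j x" "length w = length (active_prefix j x)" "set w \<subseteq> {0, j}"
      using orbit_eq[OF c(2)] by blast
    then have "set w \<subseteq> {0}"
      using that c active_prefix_append(1)[OF w(3) active_prefix_passive_suffix] unfolding is_root_def by simp
    then show ?thesis using w(1,2) eq_replicate_zero_iff by blast
  qed
  then show ?thesis using assms(2,3) by blast
qed

lemma root_or_first_cycle:
  assumes "c \<in> cycles p n" "v \<in> snd c"
  shows "is_root c v \<or> c = first_cycle v"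
proof (cases "is_root c v")
  case False
  obtain j x where c: "c = (j, orbit j x)" "j \<noteq> 0" using assms(1) by (auto elim: cycles_elim)
  obtain w where w: "v = w @ passive_suffix j x" "set w \<subseteq> {0, j}"
    using assms(2) c orbit_eq by auto
  have "\<not> set w \<subseteq> {0}"
    using False assms(2) c active_prefix_append(1)[OF w(2) active_prefix_passive_suffix] w(1)
    unfolding is_root_def by simp
  then obtain y where y: "y \<in> set w" "y \<noteq> 0" by auto
  then have "dropWhile (\<lambda>x. x = 0) w \<noteq> []" by auto
  then have "first_nonzero v = hd (dropWhile (\<lambda>x. x = 0) w)"
    unfolding first_nonzero_def w(1) using dropWhile_append1[of y w "\<lambda>x. x = 0"] y by simp
  also have "\<dots> = j"
    using hd_dropWhile[OF \<open>dropWhile _ w \<noteq> []\<close>] hd_in_set[OF \<open>dropWhile _ w \<noteq> []\<close>] w(2)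
    by (auto dest: set_dropWhileD)
  moreover have "orbit j v = orbit j x"
    using assms(2) c by (intro orbit_eq_if_mem) simp_all
  ultimately show ?thesis using c unfolding first_cycle_def by simp
qed simp

lemma zero_is_root: "is_root (Ccyc n i) (replicate n 0)"
  unfolding is_root_def Ccyc_def active_prefix_def by (auto dest: set_takeWhileD)

section \<open>Petals and paths of cycles\<close>

lemma last_nonzero_orbit_eq:
  assumes "j \<noteq> 0" "v \<in> orbit j x" "v' \<in> orbit j x" "\<not> set v \<subseteq> {0}" "\<not> set v' \<subseteq> {0}"
  shows "last_nonzero v = last_nonzero v'"
  using last_nonzero_orbit[OF assms(1,2,4)] last_nonzero_orbit[OF assms(1,3,5)] by simp

lemma cycle_subset_verts:
  assumes "c \<in> cycles p n"
  shows "snd c \<subseteq> verts p n"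
proof -
  obtain j x where "c = (j, orbit j x)" "j \<in> {1..p}" "x \<in> verts p n"
    using assms by (rule cycles_elim)
  then show ?thesis using orbit_subset_verts[of x p n j] by simp
qed

lemma petal_subset_verts: "petal p n i \<subseteq> verts p n - {replicate n 0}"
  unfolding petal_def Let_def by blast

lemma petal_last_nonzero:
  assumes "u \<in> petal p n i"
  shows "last_nonzero u = i"
proof -
  define Z where "Z = replicate n (0::nat)"
  define E where "E = {(v, w). ((v, w) \<in> gedges p n \<or> (w, v) \<in> gedges p n) \<and> v \<noteq> Z \<and> w \<noteq> Z}"
  obtain w where w: "w \<in> snd (Ccyc n i)" "w \<noteq> Z" "(u, w) \<in> E\<^sup>*"
    using assms unfolding petal_def Let_def Z_def E_def by blast
  have edge: "last_nonzero (act j v) = last_nonzero v"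
    if "v \<in> verts p n" "j \<in> {1..p}" "v \<noteq> Z" "act j v \<noteq> Z" for v j
  proof -
    have "length v = n" using that(1) unfolding verts_def by auto
    then have "\<not> set v \<subseteq> {0}" "\<not> set (act j v) \<subseteq> {0}"
      using that(3,4) eq_replicate_zero_iff[of v n] eq_replicate_zero_iff[of "act j v" n]
      unfolding Z_def by simp_all
    then show ?thesis using last_nonzero_orbit_eq[OF _ act_in_orbit self_in_orbit] that(2) by simp
  qed
  have "last_nonzero v = last_nonzero w" if "(v, w) \<in> E\<^sup>*" for v
    using that
  proof (induction rule: converse_rtrancl_induct)
    case (step v y)
    from step.hyps(1) consider j where "y = act j v" "v \<in> verts p n" "j \<in> {1..p}" "v \<noteq> Z" "y \<noteq> Z"
      | j where "v = act j y" "y \<in> verts p n" "j \<in> {1..p}" "v \<noteq> Z" "y \<noteq> Z"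
      unfolding E_def gedges_def by blast
    then have "last_nonzero v = last_nonzero y" using edge by metis
    then show ?case using step.IH by simp
  qed simp
  moreover have "last_nonzero w = i"
  proof -
    have "length w = n" and w01: "set w \<subseteq> {0, i}" using w(1) unfolding Ccyc_def by auto
    then have "\<not> set w \<subseteq> {0}" using eq_replicate_zero_iff[of w n] w(2) unfolding Z_def by simp
    then show ?thesis using last_nonzero_eq[OF w01] by simp
  qed
  ultimately show ?thesis using w(3) by simp
qed

lemma petal_closed_orbit:
  assumes "v' \<in> petal p n i" "v \<in> orbit j v'" "j \<in> {1..p}"
    and avoids_zero: "\<forall>y\<in>orbit j v'. y \<noteq> replicate n 0"
  shows "v \<in> petal p n i"
proof -
  define Z where "Z = replicate n (0::nat)"
  define E where "E = {(v, w). ((v, w) \<in> gedges p n \<or> (w, v) \<in> gedges p n) \<and> v \<noteq> Z \<and> w \<noteq> Z}"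
  have petal: "petal p n i = {v \<in> verts p n - {Z}. \<exists>w \<in> snd (Ccyc n i) - {Z}. (v, w) \<in> E\<^sup>*}"
    unfolding petal_def Let_def Z_def E_def by simp
  have orb: "orbit j v = orbit j v'" using assms(2,3) by (intro orbit_eq_if_mem) auto
  have verts: "orbit j v \<subseteq> verts p n"
    using orb orbit_subset_verts assms(1,3) petal_subset_verts by fastforce
  have "(v, (act j ^^ m) v) \<in> E\<^sup>*" for m
  proof (induction m)
    case (Suc m)
    have "(act j ^^ m) v \<in> orbit j v" "(act j ^^ Suc m) v \<in> orbit j v"
      unfolding orbit_def by blast+
    then have "((act j ^^ m) v, (act j ^^ Suc m) v) \<in> E"
      using verts avoids_zero assms(3) orb unfolding E_def gedges_def Z_def by auto
    with Suc.IH show ?case by (rule rtrancl_into_rtrancl)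
  qed simp
  moreover obtain m where "v' = (act j ^^ m) v"
    using self_in_orbit[of v' j] orb unfolding orbit_def by auto
  moreover obtain w where "w \<in> snd (Ccyc n i) - {Z}" "(v', w) \<in> E\<^sup>*"
    using assms(1) petal by auto
  moreover have "v \<in> verts p n - {Z}"
    using verts self_in_orbit[of v j] avoids_zero orb Z_def by auto
  ultimately show ?thesis unfolding petal by (blast intro: rtrancl_trans)
qed

lemma last_nonzero_along_cycle_path:
  assumes cyc: "set cs \<subseteq> cycles p n"
    and vs: "\<forall>l<length cs. vs ! l \<in> snd (cs ! l)"
      "\<forall>l. 0 < l \<and> l < length cs \<longrightarrow> vs ! l \<in> snd (cs ! (l - 1))"
    and "l < length cs" and nonzero: "\<forall>l'\<le>l. \<not> set (vs ! l') \<subseteq> {0}"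
  shows "last_nonzero (vs ! l) = last_nonzero (vs ! 0)"
  using assms(4,5)
proof (induction l)
  case (Suc l)
  have l: "l < length cs" "Suc l < length cs" using Suc.prems(1) by auto
  have "cs ! l \<in> cycles p n" using cyc nth_mem[OF l(1)] by blast
  then obtain j x where c: "cs ! l = (j, orbit j x)" "j \<in> {1..p}" "x \<in> verts p n"
    by (rule cycles_elim)
  have "vs ! l \<in> orbit j x" "vs ! Suc l \<in> orbit j x"
    using vs(1)[rule_format, OF l(1)] vs(2)[rule_format, of "Suc l"] l(2) c(1) by simp_all
  then have "last_nonzero (vs ! Suc l) = last_nonzero (vs ! l)"
    using last_nonzero_orbit_eq[of j "vs ! Suc l" x "vs ! l"] c(2) Suc.prems(2) by simp
  then show ?case using Suc by simp
qed simp

text \<open>A path of cycles from a vertex of the \<open>i\<close>-th petal cannot end by entering \<open>C\<^sub>n\<^sup>i\<close>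
  through \<open>0\<^sup>n\<close>: the last nonzero letter stays \<open>i\<close> until the path reaches \<open>0\<^sup>n\<close>, so the
  cycle before that would be \<open>C\<^sub>n\<^sup>i\<close> again.\<close>

lemma cycle_path_ends_off_zero:
  assumes petal: "u \<in> petal p n i"
    and cs: "cs \<noteq> []" "last cs = Ccyc n i" "distinct cs" "set cs \<subseteq> cycles p n"
    and vs: "length vs = length cs" "distinct vs" "vs ! 0 = u"
      "\<forall>l<length cs. vs ! l \<in> snd (cs ! l)"
      "\<forall>l. 0 < l \<and> l < length cs \<longrightarrow> vs ! l \<in> snd (cs ! (l - 1))"
  shows "last vs \<noteq> replicate n 0"
proof
  define m where "m = length cs"
  assume "last vs = replicate n 0"
  moreover have "vs \<noteq> []" using cs(1) vs(1) by auto
  ultimately have last_zero: "vs ! (m - 1) = replicate n 0"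
    unfolding m_def vs(1)[symmetric] by (simp add: last_conv_nth)
  have "u \<noteq> replicate n 0" using petal petal_subset_verts by blast
  then have "m \<noteq> 1" using vs(3) last_zero by auto
  moreover have "m \<noteq> 0" using cs(1) unfolding m_def by simp
  ultimately have idx: "m - 2 < m" "0 < m - 1" "m - 1 < m" "m - 1 - 1 = m - 2" by auto
  have nonzero: "\<not> set (vs ! l) \<subseteq> {0}" if "l < m - 1" for l
  proof -
    have "vs ! l \<noteq> vs ! (m - 1)" using vs(1,2) that unfolding m_def by (simp add: nth_eq_iff_index_eq)
    moreover have "l < length cs" using that unfolding m_def by simp
    then have "vs ! l \<in> verts p n"
      using vs(4) cycle_subset_verts[of "cs ! l"] cs(4) nth_mem[of l cs] by blast
    ultimately show ?thesis using last_zero eq_replicate_zero_iff[of "vs ! l" n] unfolding verts_def by simp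
  qed
  have "cs ! (m - 2) \<in> cycles p n" using cs(4) idx(1) nth_mem[of "m - 2" cs] unfolding m_def by blast
  then obtain j x where c: "cs ! (m - 2) = (j, orbit j x)" "j \<in> {1..p}" "x \<in> verts p n"
    by (rule cycles_elim)
  have "replicate n 0 \<in> orbit j x"
    using vs(5) last_zero c idx unfolding m_def by (metis snd_conv)
  then have C: "cs ! (m - 2) = Ccyc n j"
    using orbit_eq_Ccyc_if_zero_mem[of j n x] c unfolding Ccyc_def by auto
  have "vs ! (m - 2) \<in> snd (Ccyc n j)" using vs(4) C idx unfolding m_def by metis
  then have "last_nonzero (vs ! (m - 2)) = j"
    using last_nonzero_eq nonzero[of "m - 2"] idx unfolding Ccyc_def by auto
  moreover have "\<forall>l'\<le>m - 2. \<not> set (vs ! l') \<subseteq> {0}" using nonzero idx by simp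
  then have "last_nonzero (vs ! (m - 2)) = last_nonzero (vs ! 0)"
    using last_nonzero_along_cycle_path[OF cs(4) vs(4,5)] idx(1) unfolding m_def by blast
  then have "last_nonzero (vs ! (m - 2)) = i" using petal_last_nonzero[OF petal] vs(3) by simp
  ultimately have "cs ! (m - 2) = cs ! (m - 1)"
    using C cs(1,2) unfolding m_def by (simp add: last_conv_nth)
  then show False using cs(3) idx unfolding m_def by (simp add: nth_eq_iff_index_eq)
qed

lemma cycle_path_normal_form:
  assumes petal: "u \<in> petal p n i" and path: "is_cycle_path p n u cs (Ccyc n i)"
  obtains vs where "length vs = length cs" "vs ! 0 = u"
    "\<forall>l<length cs. cs ! l = first_cycle (vs ! l)"
    "\<forall>l. 0 < l \<and> l < length cs \<longrightarrow> is_root (cs ! (l - 1)) (vs ! l)"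
proof -
  define m where "m = length cs"
  have cs: "cs \<noteq> []" "last cs = Ccyc n i" "distinct cs" "set cs \<subseteq> cycles p n"
    using path unfolding is_cycle_path_def by auto
  obtain vs where vs: "length vs = length cs" "distinct vs" "vs ! 0 = u"
      "\<forall>l<length cs. vs ! l \<in> snd (cs ! l)"
      "\<forall>l. 0 < l \<and> l < length cs \<longrightarrow> vs ! l \<in> snd (cs ! (l - 1))"
    using path unfolding is_cycle_path_def by blast
  have m: "0 < m" using cs(1) unfolding m_def by simp
  have cyc: "cs ! l \<in> cycles p n" if "l < m" for l using cs(4) that unfolding m_def by auto
  have last_first: "cs ! (m - 1) = first_cycle (vs ! (m - 1))"
  proof -
    have last: "cs ! (m - 1) = Ccyc n i" using cs(1,2) unfolding m_def by (simp add: last_conv_nth)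
    then have C: "Ccyc n i \<in> cycles p n" using cyc[of "m - 1"] m by simp
    have "last vs = vs ! (m - 1)"
      using vs(1) cs(1) unfolding m_def by (metis last_conv_nth length_0_conv)
    then have "vs ! (m - 1) \<noteq> replicate n 0"
      using cycle_path_ends_off_zero[OF petal cs vs] by simp
    then have "\<not> is_root (Ccyc n i) (vs ! (m - 1))"
      using root_unique[OF C zero_is_root] by metis
    moreover have "vs ! (m - 1) \<in> snd (Ccyc n i)"
      using vs(4) m last unfolding m_def by (metis diff_less zero_less_one)
    ultimately show ?thesis using root_or_first_cycle[OF C] last by auto
  qed
  have step: "is_root (cs ! (l - 1)) (vs ! l) \<and> cs ! (l - 1) = first_cycle (vs ! (l - 1))"
    if l: "0 < l" "l < m" and first: "cs ! l = first_cycle (vs ! l)" for l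
  proof
    have c: "cs ! (l - 1) \<in> cycles p n" using cyc l by simp
    have "cs ! (l - 1) \<noteq> cs ! l" using cs(3) l unfolding m_def by (simp add: nth_eq_iff_index_eq)
    moreover have "vs ! l \<in> snd (cs ! (l - 1))" using vs(5) l unfolding m_def by blast
    ultimately show root: "is_root (cs ! (l - 1)) (vs ! l)"
      using root_or_first_cycle[OF c] first by metis
    have "vs ! (l - 1) \<noteq> vs ! l" using vs(1,2) l unfolding m_def by (simp add: nth_eq_iff_index_eq)
    then have "\<not> is_root (cs ! (l - 1)) (vs ! (l - 1))"
      using root_unique[OF c root] by metis
    moreover have "vs ! (l - 1) \<in> snd (cs ! (l - 1))" using vs(4) l unfolding m_def by simp
    ultimately show "cs ! (l - 1) = first_cycle (vs ! (l - 1))"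
      using root_or_first_cycle[OF c] by blast
  qed
  have from_end: "cs ! (m - 1 - d) = first_cycle (vs ! (m - 1 - d))" if "d < m" for d
    using that
  proof (induction d)
    case (Suc d)
    have l: "0 < m - 1 - d" "m - 1 - d < m" using Suc.prems by auto
    have "m - 1 - d - 1 = m - 1 - Suc d" by simp
    then show ?case using step[OF l Suc.IH[OF Suc_lessD[OF Suc.prems]]] by simp
  qed (use last_first in simp)
  have "\<forall>l<m. cs ! l = first_cycle (vs ! l)"
  proof (intro allI impI)
    fix l assume "l < m"
    then have "m - 1 - (m - 1 - l) = l" "m - 1 - l < m" by auto
    then show "cs ! l = first_cycle (vs ! l)" using from_end by metis
  qed
  then show thesis using that vs step unfolding m_def by blast
qed

lemma nth_equality_if_distinct_last:
  assumes "distinct ys" "xs \<noteq> []" "length xs \<le> length ys" "last xs = last ys"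
    and "\<forall>l<length xs. xs ! l = ys ! l"
  shows "xs = ys"
proof -
  have "ys \<noteq> []" using assms(2,3) by auto
  then have "ys ! (length xs - 1) = ys ! (length ys - 1)"
    using assms(2-5) by (simp add: last_conv_nth)
  moreover have "0 < length xs" "0 < length ys" using assms(2) \<open>ys \<noteq> []\<close> by auto
  ultimately have "length xs - 1 = length ys - 1"
    using assms(1,3) by (simp add: nth_eq_iff_index_eq)
  then have "length xs = length ys"
    using \<open>0 < length xs\<close> \<open>0 < length ys\<close> by arith
  then show ?thesis using assms(5) by (simp add: nth_equalityI)
qed

lemma cycle_path_unique:
  assumes "u \<in> petal p n i"
    and path: "is_cycle_path p n u cs (Ccyc n i)" and path': "is_cycle_path p n u cs' (Ccyc n i)"
  shows "cs = cs'"
proof -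
  obtain vs where vs: "vs ! 0 = u" "\<forall>l<length cs. cs ! l = first_cycle (vs ! l)"
      "\<forall>l. 0 < l \<and> l < length cs \<longrightarrow> is_root (cs ! (l - 1)) (vs ! l)"
    using cycle_path_normal_form[OF assms(1) path] by metis
  obtain vs' where vs': "vs' ! 0 = u" "\<forall>l<length cs'. cs' ! l = first_cycle (vs' ! l)"
      "\<forall>l. 0 < l \<and> l < length cs' \<longrightarrow> is_root (cs' ! (l - 1)) (vs' ! l)"
    using cycle_path_normal_form[OF assms(1) path'] by metis
  have cyc: "set cs \<subseteq> cycles p n" using path unfolding is_cycle_path_def by blast
  have agree: "cs ! l = cs' ! l \<and> vs ! l = vs' ! l" if "l < length cs" "l < length cs'" for l
    using that
  proof (induction l)
    case (Suc l)
    then have "is_root (cs ! l) (vs ! Suc l)" "is_root (cs ! l) (vs' ! Suc l)"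
      using vs(3) vs'(3) by auto
    moreover have "cs ! l \<in> cycles p n" using cyc Suc.prems(1) nth_mem[of l cs] by auto
    ultimately have "vs ! Suc l = vs' ! Suc l" using root_unique by blast
    then show ?case using vs(2) vs'(2) Suc.prems by simp
  qed (use vs vs' in simp)
  have "cs \<noteq> [] \<and> last cs = Ccyc n i \<and> distinct cs" "cs' \<noteq> [] \<and> last cs' = Ccyc n i \<and> distinct cs'"
    using path path' unfolding is_cycle_path_def by auto
  then show ?thesis
    using agree nth_equality_if_distinct_last[of cs' cs] nth_equality_if_distinct_last[of cs cs']
    by (cases "length cs \<le> length cs'") auto
qed

lemma path_of_cycles_eqI:
  assumes "i \<in> {1..p}" "u \<in> petal p n i" "is_cycle_path p n u cs (Ccyc n i)"
  shows "path_of_cycles p n u = cs"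
  unfolding path_of_cycles_def
proof (rule the_equality)
  fix cs' assume "\<exists>i'\<in>{1..p}. u \<in> petal p n i' \<and> is_cycle_path p n u cs' (Ccyc n i')"
  then obtain i' where "u \<in> petal p n i'" "is_cycle_path p n u cs' (Ccyc n i')" by blast
  moreover have "i' = i" using petal_last_nonzero assms(2) calculation(1) by metis
  ultimately show "cs' = cs" using cycle_path_unique assms(2,3) by blast
qed (use assms in blast)

section \<open>The path of cycles of a decomposed word\<close>

lemma append_Cons_neq_replicate: "b \<noteq> x \<Longrightarrow> w @ b # s \<noteq> replicate n x"
proof
  assume "b \<noteq> x" and "w @ b # s = replicate n x"
  then have "b \<in> set (replicate n x)" by (metis in_set_conv_decomp)
  then show False using \<open>b \<noteq> x\<close> by simp
qed

lemma length_takeWhile_replicate_Cons: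
  "b \<noteq> x \<Longrightarrow> length (takeWhile (\<lambda>y. y = x) (replicate m x @ b # s)) = m"
  by (induction m) auto

locale decomposed_word =
  fixes p n k t :: nat and u a :: "nat list" and us :: "nat list list"
  assumes u_vert: "u \<in> verts p n" and u_nonzero: "u \<noteq> replicate n 0"
    and letters: "\<forall>j<t. a ! j \<in> {1..p}"
    and letters_alternate: "\<forall>j. j + 1 < t \<longrightarrow> a ! (j + 1) \<noteq> a ! j"
    and blocks: "\<forall>j<t. set (us ! j) \<subseteq> {0, a ! j}"
    and u_eq: "u = replicate k 0 @ concat (map (\<lambda>j. a ! j # us ! j) [0..<t])"
begin

definition N :: "nat \<Rightarrow> nat" where
  "N j = k + (j + 1) + (\<Sum>l\<le>j. length (us ! l))"

definition rest :: "nat \<Rightarrow> nat list" where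
  "rest j = concat (map (\<lambda>l. a ! l # us ! l) [j + 1..<t])"

definition cycle_set :: "nat \<Rightarrow> nat list set" where
  "cycle_set j = {w @ rest j | w. length w = N j \<and> set w \<subseteq> {0, a ! j}}"

definition cycle_path :: "(nat \<times> nat list set) list" where
  "cycle_path = map (\<lambda>j. (a ! j, cycle_set j)) [0..<t]"

text \<open>For \<open>l > 0\<close>, \<open>vertex l\<close> is the root of the \<open>(l - 1)\<close>-th cycle, where the path passes to
  the \<open>l\<close>-th one.\<close>

definition vertex :: "nat \<Rightarrow> nat list" where
  "vertex l = (if l = 0 then u else replicate (N (l - 1)) 0 @ rest (l - 1))"

lemma t_pos: "0 < t"
proof (rule ccontr)
  assume "\<not> 0 < t"
  then have "u = replicate k 0" using u_eq by simp
  then show False using u_vert u_nonzero unfolding verts_def by auto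
qed

lemma letter_nonzero: "j < t \<Longrightarrow> a ! j \<noteq> 0"
  using letters by auto

lemma rest_eq_Cons: "j + 1 < t \<Longrightarrow> rest j = a ! (j + 1) # us ! (j + 1) @ rest (j + 1)"
  unfolding rest_def by (simp add: upt_conv_Cons)

lemma rest_last: "rest (t - 1) = []"
  unfolding rest_def using t_pos by simp

lemma u_split: "u = replicate k 0 @ a ! 0 # us ! 0 @ rest 0"
  using u_eq t_pos unfolding rest_def by (simp add: upt_conv_Cons)

lemma N_0: "N 0 = k + 1 + length (us ! 0)"
  unfolding N_def by simp

lemma N_Suc: "N (Suc j) = N j + 1 + length (us ! Suc j)"
  unfolding N_def by simp

lemma strict_mono_N: "strict_mono N"
  by (simp add: strict_mono_Suc_iff N_Suc)

lemma N_add_length_rest: "j < t \<Longrightarrow> N j + length (rest j) = n"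
proof (induction j)
  case 0
  then show ?case using u_split u_vert N_0 unfolding verts_def by simp
next
  case (Suc j)
  then show ?case using rest_eq_Cons[of j] N_Suc[of j] by simp
qed

lemma N_last: "N (t - 1) = n"
  using N_add_length_rest[of "t - 1"] rest_last t_pos by simp

lemma set_rest_subset: "set (rest j) \<subseteq> set u"
  unfolding rest_def u_eq by auto

lemma active_prefix_rest: "j < t \<Longrightarrow> active_prefix (a ! j) (rest j) = []"
proof (cases "j + 1 < t")
  case True
  then show ?thesis
    using rest_eq_Cons letter_nonzero[of "j + 1"] letters_alternate unfolding active_prefix_def by auto
next
  case False
  moreover assume "j < t"
  ultimately have "j = t - 1" by simp
  then show ?thesis using rest_last unfolding active_prefix_def by simp
qed

lemma active_prefix_root:
  assumes "j < t"
  shows "active_prefix (a ! j) (replicate (N j) 0 @ rest j) = replicate (N j) 0"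
    and "passive_suffix (a ! j) (replicate (N j) 0 @ rest j) = rest j"
proof -
  have "set (replicate (N j) 0) \<subseteq> {0, a ! j}" by auto
  then show "active_prefix (a ! j) (replicate (N j) 0 @ rest j) = replicate (N j) 0"
    and "passive_suffix (a ! j) (replicate (N j) 0 @ rest j) = rest j"
    using active_prefix_append active_prefix_rest[OF assms] by simp_all
qed

lemma cycle_set_eq_orbit: "j < t \<Longrightarrow> cycle_set j = orbit (a ! j) (replicate (N j) 0 @ rest j)"
  using orbit_eq[OF letter_nonzero] active_prefix_root unfolding cycle_set_def by simp

lemma root_in_verts: "j < t \<Longrightarrow> replicate (N j) 0 @ rest j \<in> verts p n"
  using N_add_length_rest set_rest_subset u_vert unfolding verts_def by auto

lemma card_cycle_set: "j < t \<Longrightarrow> card (cycle_set j) = 2 ^ N j"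
  using cycle_set_eq_orbit card_orbit[OF letter_nonzero] active_prefix_root by simp

lemma cycle_in_cycles: "j < t \<Longrightarrow> (a ! j, cycle_set j) \<in> cycles p n"
proof -
  assume j: "j < t"
  have "2 ^ 1 \<le> card (cycle_set j)"
    using card_cycle_set[OF j] power_increasing[of 1 "N j" 2] unfolding N_def by simp
  then show ?thesis
    using cycle_set_eq_orbit[OF j] root_in_verts[OF j] letters j unfolding cycles_def by force
qed

lemma last_cycle: "(a ! (t - 1), cycle_set (t - 1)) = Ccyc n (a ! (t - 1))"
  using N_last rest_last unfolding cycle_set_def Ccyc_def by auto

lemma vertex_in_cycle: "l < t \<Longrightarrow> vertex l \<in> cycle_set l"
proof (cases l)
  case 0
  then show ?thesis using u_split N_0 blocks t_pos unfolding vertex_def cycle_set_def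
    by (intro CollectI exI[of _ "replicate k 0 @ a ! 0 # us ! 0"]) auto
next
  case (Suc l')
  moreover assume "l < t"
  ultimately have "vertex l = (replicate (N l') 0 @ a ! l # us ! l) @ rest l"
    using rest_eq_Cons[of l'] unfolding vertex_def by simp
  then show ?thesis using N_Suc[of l'] Suc \<open>l < t\<close> blocks unfolding cycle_set_def
    by (intro CollectI exI[of _ "replicate (N l') 0 @ a ! l # us ! l"]) auto
qed

lemma vertex_in_previous_cycle: "0 < l \<Longrightarrow> vertex l \<in> cycle_set (l - 1)"
  unfolding vertex_def cycle_set_def by auto

lemma leading_zeros_vertex:
  "l < t \<Longrightarrow> length (takeWhile (\<lambda>x. x = 0) (vertex l)) = (if l = 0 then k else N (l - 1))"
proof (cases l)
  case 0
  then show ?thesis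
    using u_split length_takeWhile_replicate_Cons[OF letter_nonzero[OF t_pos]] unfolding vertex_def by simp
next
  case (Suc l')
  moreover assume "l < t"
  ultimately show ?thesis
    using rest_eq_Cons[of l'] length_takeWhile_replicate_Cons[OF letter_nonzero[OF \<open>l < t\<close>]]
    unfolding vertex_def by simp
qed

lemma inj_on_vertex: "inj_on vertex {..<t}"
proof -
  define zeros where "zeros l = (if l = 0 then k else N (l - 1))" for l
  have "zeros l < zeros (Suc l)" for l
    using N_0 strict_monoD[OF strict_mono_N, of "l - 1" l] unfolding zeros_def by (cases l) auto
  then have "strict_mono zeros" by (simp add: strict_mono_Suc_iff)
  then show ?thesis
    using leading_zeros_vertex unfolding inj_on_def zeros_def[symmetric]
    by (metis lessThan_iff strict_mono_eq)
qed

lemma vertex_nonzero: "l < t \<Longrightarrow> vertex l \<noteq> replicate n 0"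
proof (cases l)
  case (Suc l')
  moreover assume "l < t"
  ultimately show ?thesis
    using rest_eq_Cons[of l'] append_Cons_neq_replicate[OF letter_nonzero[OF \<open>l < t\<close>]]
    unfolding vertex_def by simp
qed (use u_nonzero vertex_def in simp)

lemma cycle_set_nonzero:
  assumes "j + 1 < t"
  shows "replicate n 0 \<notin> cycle_set j"
proof -
  have "replicate n 0 \<noteq> w @ rest j" for w
    using rest_eq_Cons[OF assms] append_Cons_neq_replicate[OF letter_nonzero[OF assms]] by metis
  then show ?thesis unfolding cycle_set_def by blast
qed

lemma distinct_cycle_path: "distinct cycle_path"
proof -
  have "inj_on (\<lambda>j. (a ! j, cycle_set j)) {0..<t}"
  proof (rule inj_onI)
    fix x y assume "x \<in> {0..<t}" "y \<in> {0..<t}" "(a ! x, cycle_set x) = (a ! y, cycle_set y)"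
    then have "(2::nat) ^ N x = 2 ^ N y" using card_cycle_set by (metis atLeastLessThan_iff prod.inject)
    then show "x = y" using strict_mono_eq[OF strict_mono_N] by simp
  qed
  then show ?thesis unfolding cycle_path_def by (simp add: distinct_map)
qed

lemma is_cycle_path: "is_cycle_path p n u cycle_path (Ccyc n (a ! (t - 1)))"
  unfolding is_cycle_path_def
proof (intro conjI exI)
  show "cycle_path \<noteq> []" "last cycle_path = Ccyc n (a ! (t - 1))"
    using t_pos last_cycle unfolding cycle_path_def by (simp_all add: last_map)
  show "set cycle_path \<subseteq> cycles p n"
    using cycle_in_cycles unfolding cycle_path_def by auto
  show "distinct cycle_path" by (rule distinct_cycle_path)
  show "distinct (map vertex [0..<t])"
    using inj_on_vertex by (simp add: distinct_map atLeast0LessThan)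
  show "length (map vertex [0..<t]) = length cycle_path" "map vertex [0..<t] ! 0 = u"
    using t_pos unfolding cycle_path_def vertex_def by simp_all
  show "\<forall>l<length cycle_path. map vertex [0..<t] ! l \<in> snd (cycle_path ! l)"
    using vertex_in_cycle unfolding cycle_path_def by simp
  show "\<forall>l. 0 < l \<and> l < length cycle_path \<longrightarrow> map vertex [0..<t] ! l \<in> snd (cycle_path ! (l - 1))"
    using vertex_in_previous_cycle unfolding cycle_path_def by (simp add: less_imp_diff_less)
qed

lemma vertex_in_petal:
  assumes "l < t"
  shows "vertex l \<in> petal p n (a ! (t - 1))"
proof -
  have "l \<le> t - 1" using assms by simp
  then show ?thesis
  proof (induction rule: inc_induct)
    case base
    have last: "t - 1 < t" using t_pos by simp
    have "vertex (t - 1) \<in> snd (Ccyc n (a ! (t - 1)))"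
      using vertex_in_cycle[OF last] last_cycle by (metis snd_conv)
    moreover have "vertex (t - 1) \<in> verts p n"
      using cycle_subset_verts[OF cycle_in_cycles[OF last]] vertex_in_cycle[OF last] by auto
    ultimately show ?case
      using vertex_nonzero[OF last] unfolding petal_def Let_def by auto
  next
    case (step j)
    then have j: "j < t" "j + 1 < t" by auto
    have "orbit (a ! j) (vertex (Suc j)) = cycle_set j"
      using vertex_in_previous_cycle[of "Suc j"] cycle_set_eq_orbit[OF j(1)]
        orbit_eq_if_mem[OF letter_nonzero[OF j(1)]] by simp
    then show ?case
      using petal_closed_orbit[OF step.IH] vertex_in_cycle[OF j(1)] cycle_set_nonzero[OF j(2)]
        letters j(1) by metis
  qed
qed

end

theorem lemma4p11:
  fixes p n k t :: nat and u :: "nat list" and a :: "nat list" and us :: "nat list list"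
  assumes "p \<ge> 1" and "n \<ge> 1"
    and "u \<in> verts p n" and "u \<noteq> replicate n 0"
    and "length a = t" and "length us = t"
    and "\<forall>j<t. a ! j \<in> {1..p}"
    and "\<forall>j. j + 1 < t \<longrightarrow> a ! (j + 1) \<noteq> a ! j"
    and "\<forall>j<t. set (us ! j) \<subseteq> {0, a ! j}"
    and "u = replicate k 0 @ concat (map (\<lambda>j. a ! j # us ! j) [0..<t])"
  shows "let P = path_of_cycles p n u;
             N = (\<lambda>j. k + (j + 1) + (\<Sum>l\<le>j. length (us ! l)));
             rest = (\<lambda>j. concat (map (\<lambda>l. a ! l # us ! l) [j + 1..<t]))
         in length P = t
          \<and> (\<forall>j<t. P ! j = (a ! j, {w @ rest j | w. length w = N j \<and> set w \<subseteq> {0, a ! j}}))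
          \<and> last P = Ccyc n (a ! (t - 1))
          \<and> map cyc_len P = map (\<lambda>j. 2 ^ N j) [0..<t]
          \<and> (2::nat) ^ N (t - 1) = 2 ^ n"
proof -
  interpret decomposed_word p n k t u a us
    using assms(3,4,7-10) by unfold_locales
  have "u \<in> petal p n (a ! (t - 1))"
    using vertex_in_petal[OF t_pos] unfolding vertex_def by simp
  moreover have "a ! (t - 1) \<in> {1..p}" using letters t_pos by simp
  ultimately have P: "path_of_cycles p n u = cycle_path"
    using path_of_cycles_eqI is_cycle_path by blast
  have "length cycle_path = t" "\<forall>j<t. cycle_path ! j = (a ! j, cycle_set j)"
    "last cycle_path = Ccyc n (a ! (t - 1))"
    using t_pos last_cycle unfolding cycle_path_def by (simp_all add: last_map)
  moreover have "map cyc_len cycle_path = map (\<lambda>j. 2 ^ N j) [0..<t]"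
    using card_cycle_set unfolding cycle_path_def cyc_len_def by simp
  ultimately show ?thesis
    using N_last unfolding Let_def P cycle_set_def N_def rest_def by simp
qed

end
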